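(* Fix $Z_1,\ldots,Z_n$, $X_{n+1}$, a level $\tilde\alpha\in[0,1]$, and $\alpha\in(0,1)$, and let $V$ be a fixed score function. For $y\in\mathbb R$ set $V_{n+1}=V(X_{n+1},y)$, $v^*_i=Q\big(\tilde\alpha;\sum_{j=1}^np^H_{i,j}\delta_{V_j}+p^H_{i,n+1}\delta_{V_{n+1}}\big)$ for $i=1,\ldots,n+1$, and $$\hat\alpha(y)=\sum_{i=1}^{n+1}\frac{w(X_i)}{\sum_{j=1}^{n+1}w(X_j)}\mathbb 1\{V_i\le v^*_i\}.$$ Let $\bar v^*=Q(\tilde\alpha;\hat{\mathcal F})$, $v^*_{i1}=Q(\tilde\alpha;\sum_{j=1}^np^H_{i,j}\delta_{V_j}+p^H_{i,n+1}\delta_{\bar v^*})$ and $v^*_{i2}=Q(\tilde\alpha;\sum_{j=1}^np^H_{i,j}\delta_{V_j}+p^H_{i,n+1}\delta_0)$, $i=1,\ldots,n$. If $$\sum_{i=1}^n\frac{w(X_i)}{\sum_{j=1}^{n+1}w(X_j)}\mathbb 1\{V_i\le v^*_{i1}\}\ge\alpha\quad\text{and}\quad\sum_{i=1}^n\frac{w(X_i)}{\sum_{j=1}^{n+1}w(X_j)}\mathbb 1\{V_i\le v^*_{i2}\}+\frac{w(X_{n+1})}{\sum_{j=1}^{n+1}w(X_j)}\ge\alpha,$$ then $\inf_{y\in\mathbb R}\hat\alpha(y)\ge\alpha$.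
   Context: $w:\mathbb R^p\to(0,\infty)$ is a given weight function (the density ratio $d\tilde P_X/dP_X$ in the covariate-shift setting; $w\equiv1$ in the i.i.d. setting). $X=\{X_1,\ldots,X_{n+1}\}$ (unordered). A localizer is a function $H(x_1,x_2,X)\in[0,1]$ of $x_1,x_2\in\mathbb R^p$ and of the unordered set $X$, with $H(x,x,X)=1$; $H_{i,j}=H(X_i,X_j,X)$, $p^H_{i,j}=H_{i,j}/\sum_{k=1}^{n+1}H_{i,k}$. A fixed score function is a deterministic measurable $V:\mathbb R^p\times\mathbb R\to[0,\infty)$; $V_i=V(Z_i)$ for $i\le n$. $\hat{\mathcal F}=\sum_{j=1}^{n}p^H_{n+1,j}\delta_{V_j}+p^H_{n+1,n+1}\delta_{\infty}$; $\delta_v$ is the point mass at $v$. For a probability distribution $\mathcal F$ on $\mathbb R\cup\{\infty\}$ and $a\in[0,1]$, $Q(a;\mathcal F)=\inf\{t:\mathbb P_{T\sim\mathcal F}(T\le t)\ge a\}$. *)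

theory Defs
  imports "HOL-Analysis.Analysis" "HOL-Library.Multiset" "HOL-Library.Extended_Real"
begin

text \<open>Q(a; F) for a finite discrete distribution F = sum over j in I of p j times the point
  mass at v j, on the extended reals (so that a point mass at infinity is allowed):
  Q(a;F) = inf of all t with P(T <= t) >= a.\<close>
definition wquantile :: "real \<Rightarrow> ('i \<Rightarrow> real) \<Rightarrow> ('i \<Rightarrow> ereal) \<Rightarrow> 'i set \<Rightarrow> ereal" where
  "wquantile a p v I = Inf {t :: ereal. (\<Sum>j\<in>I. if v j \<le> t then p j else 0) \<ge> a}"

definition sampleX :: "nat \<Rightarrow> (nat \<Rightarrow> 'x) \<Rightarrow> 'x multiset" where
  "sampleX n X = image_mset X (mset_set {1..Suc n})"

definition pH :: "('x \<Rightarrow> 'x \<Rightarrow> 'x multiset \<Rightarrow> real) \<Rightarrow> nat \<Rightarrow> (nat \<Rightarrow> 'x) \<Rightarrow> nat \<Rightarrow> nat \<Rightarrow> real" where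
  "pH H n X i j = H (X i) (X j) (sampleX n X) / (\<Sum>k\<in>{1..Suc n}. H (X i) (X k) (sampleX n X))"

definition alpha_hat ::
  "('x \<Rightarrow> real) \<Rightarrow> ('x \<Rightarrow> 'x \<Rightarrow> 'x multiset \<Rightarrow> real) \<Rightarrow> ('x \<times> real \<Rightarrow> real)
   \<Rightarrow> nat \<Rightarrow> (nat \<Rightarrow> 'x) \<Rightarrow> (nat \<Rightarrow> real) \<Rightarrow> real \<Rightarrow> real \<Rightarrow> real" where
  "alpha_hat w H V n X Y alpha_t y =
     (let S = (\<lambda>j. if j \<le> n then V (X j, Y j) else V (X (Suc n), y));
          vstar = (\<lambda>i. wquantile alpha_t (pH H n X i) (\<lambda>j. ereal (S j)) {1..Suc n})
      in (\<Sum>i\<in>{1..Suc n}. w (X i) / (\<Sum>j\<in>{1..Suc n}. w (X j)) *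
            (if ereal (S i) \<le> vstar i then 1 else 0)))"

end

theory Submission
  imports Defs
begin

text \<open>
  Only the score of the test point depends on y, and each local quantile is monotone in
  that score. If the test point is covered, its score u is at least 0, so every calibration
  point covered with the test score set to 0 is still covered: this is the second condition.
  If it is not covered, u exceeds the local quantile at the test point, and then it also
  exceeds the quantile with the test score set to infinity, which is the first condition.
\<close>

lemma wquantile_mono:
  assumes "\<And>j. j \<in> I \<Longrightarrow> 0 \<le> p j" and "\<And>j. j \<in> I \<Longrightarrow> v j \<le> v' j"
  shows "wquantile a p v I \<le> wquantile a p v' I"
  unfolding wquantile_def
proof (rule Inf_superset_mono, safe)
  fix t :: ereal
  assume "a \<le> (\<Sum>j\<in>I. if v' j \<le> t then p j else 0)"
  also have "\<dots> \<le> (\<Sum>j\<in>I. if v j \<le> t then p j else 0)"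
    using assms order_trans by (intro sum_mono) fastforce
  finally show "a \<le> (\<Sum>j\<in>I. if v j \<le> t then p j else 0)" .
qed

lemma wquantile_le_of_less:
  assumes "wquantile a p v I < c"
    and "\<And>j t. j \<in> I \<Longrightarrow> t < c \<Longrightarrow> v' j \<le> t \<longleftrightarrow> v j \<le> t"
  shows "wquantile a p v' I \<le> c"
proof -
  obtain t where t: "t < c" "a \<le> (\<Sum>j\<in>I. if v j \<le> t then p j else 0)"
    using assms(1) unfolding wquantile_def by (auto simp: Inf_less_iff)
  have "(\<Sum>j\<in>I. if v' j \<le> t then p j else 0) = (\<Sum>j\<in>I. if v j \<le> t then p j else 0)"
    using assms(2) t(1) by (intro sum.cong) auto
  with t(2) have "wquantile a p v' I \<le> t"
    unfolding wquantile_def by (intro Inf_lower) simp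
  with t(1) show ?thesis by simp
qed

lemma pH_nonneg:
  assumes "\<And>x1 x2 M. 0 \<le> H x1 x2 M"
  shows "0 \<le> pH H n X i j"
  unfolding pH_def using assms by (intro divide_nonneg_nonneg sum_nonneg)

definition augmented_scores :: "nat \<Rightarrow> (nat \<Rightarrow> real) \<Rightarrow> ereal \<Rightarrow> nat \<Rightarrow> ereal" where
  "augmented_scores n s c j = (if j \<le> n then ereal (s j) else c)"

lemma alpha_hat_split:
  fixes V :: "'x \<times> real \<Rightarrow> real" and X :: "nat \<Rightarrow> 'x" and Y :: "nat \<Rightarrow> real"
    and w :: "'x \<Rightarrow> real" and n :: nat and y :: real and a :: real
    and H :: "'x \<Rightarrow> 'x \<Rightarrow> 'x multiset \<Rightarrow> real"
  defines "u \<equiv> ereal (V (X (Suc n), y))"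
    and "W \<equiv> \<Sum>j\<in>{1..Suc n}. w (X j)"
    and "q \<equiv> \<lambda>i c. wquantile a (pH H n X i) (augmented_scores n (\<lambda>j. V (X j, Y j)) c) {1..Suc n}"
  shows "alpha_hat w H V n X Y a y =
      (\<Sum>i\<in>{1..n}. w (X i) / W * (if ereal (V (X i, Y i)) \<le> q i u then 1 else 0))
      + w (X (Suc n)) / W * (if u \<le> q (Suc n) u then 1 else 0)"
proof -
  have scores: "(\<lambda>j. ereal (if j \<le> n then V (X j, Y j) else V (X (Suc n), y)))
      = augmented_scores n (\<lambda>j. V (X j, Y j)) u"
    by (auto simp: augmented_scores_def u_def)
  have "alpha_hat w H V n X Y a y =
      (\<Sum>i\<in>{1..Suc n}. w (X i) / W * (if augmented_scores n (\<lambda>j. V (X j, Y j)) u i \<le> q i u then 1 else 0))"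
    unfolding alpha_hat_def Let_def q_def W_def
    by (simp only: scores) (simp add: augmented_scores_def u_def)
  then show ?thesis
    by (simp add: augmented_scores_def)
qed

lemma coverage_ge_of_extreme_test_scores:
  fixes q :: "nat \<Rightarrow> ereal \<Rightarrow> ereal" and s :: "nat \<Rightarrow> ereal" and c :: "nat \<Rightarrow> real"
  assumes c_nonneg: "\<And>i. i \<in> I \<Longrightarrow> 0 \<le> c i"
    and q_mono: "\<And>i a b. a \<le> b \<Longrightarrow> q i a \<le> q i b"
    and u_nonneg: "0 \<le> u"
    and vbar: "q k u < u \<Longrightarrow> vbar \<le> u"
    and at_vbar: "\<alpha> \<le> (\<Sum>i\<in>I. c i * (if s i \<le> q i vbar then 1 else 0))"
    and at_zero: "\<alpha> \<le> (\<Sum>i\<in>I. c i * (if s i \<le> q i 0 then 1 else 0)) + c k"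
  shows "\<alpha> \<le> (\<Sum>i\<in>I. c i * (if s i \<le> q i u then 1 else 0)) + c k * (if u \<le> q k u then 1 else 0)"
proof -
  have coverage_mono: "(\<Sum>i\<in>I. c i * (if s i \<le> q i a then 1 else 0))
      \<le> (\<Sum>i\<in>I. c i * (if s i \<le> q i b then 1 else 0))" if "a \<le> b" for a b
    using c_nonneg q_mono[OF that] order_trans by (intro sum_mono) fastforce
  show ?thesis
  proof (cases "u \<le> q k u")
    case True
    with at_zero coverage_mono[OF u_nonneg] show ?thesis by simp
  next
    case False
    with at_vbar coverage_mono[of vbar u] vbar show ?thesis by simp
  qed
qed

theorem lemma3:
  fixes n :: nat
    and X :: "nat \<Rightarrow> real ^ 'p"
    and Y :: "nat \<Rightarrow> real"
    and w :: "real ^ 'p \<Rightarrow> real"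
    and H :: "real ^ 'p \<Rightarrow> real ^ 'p \<Rightarrow> (real ^ 'p) multiset \<Rightarrow> real"
    and V :: "(real ^ 'p) \<times> real \<Rightarrow> real"
    and alpha_t \<alpha> :: real
  assumes w_pos: "\<And>x. w x > 0"
    and H_range: "\<And>x1 x2 M. 0 \<le> H x1 x2 M \<and> H x1 x2 M \<le> 1"
    and H_diag: "\<And>x M. H x x M = 1"
    and V_meas: "V \<in> borel_measurable borel"
    and V_nonneg: "\<And>z. V z \<ge> 0"
    and at_range: "0 \<le> alpha_t" "alpha_t \<le> 1"
    and alpha_range: "0 < \<alpha>" "\<alpha> < 1"
    and cond1: "let Vs = (\<lambda>j. V (X j, Y j));
                    vbar = wquantile alpha_t (pH H n X (Suc n))
                             (\<lambda>j. if j \<le> n then ereal (Vs j) else \<infinity>) {1..Suc n};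
                    v1 = (\<lambda>i. wquantile alpha_t (pH H n X i)
                             (\<lambda>j. if j \<le> n then ereal (Vs j) else vbar) {1..Suc n})
                in (\<Sum>i\<in>{1..n}. w (X i) / (\<Sum>j\<in>{1..Suc n}. w (X j)) *
                       (if ereal (Vs i) \<le> v1 i then 1 else 0)) \<ge> \<alpha>"
    and cond2: "let Vs = (\<lambda>j. V (X j, Y j));
                    v2 = (\<lambda>i. wquantile alpha_t (pH H n X i)
                             (\<lambda>j. if j \<le> n then ereal (Vs j) else 0) {1..Suc n})
                in (\<Sum>i\<in>{1..n}. w (X i) / (\<Sum>j\<in>{1..Suc n}. w (X j)) *
                       (if ereal (Vs i) \<le> v2 i then 1 else 0))
                   + w (X (Suc n)) / (\<Sum>j\<in>{1..Suc n}. w (X j)) \<ge> \<alpha>"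
  shows "(INF y. alpha_hat w H V n X Y alpha_t y) \<ge> \<alpha>"
proof (rule cINF_greatest[OF UNIV_not_empty])
  fix y
  define Vs where "Vs = (\<lambda>j. V (X j, Y j))"
  define u where "u = ereal (V (X (Suc n), y))"
  define W where "W = (\<Sum>j\<in>{1..Suc n}. w (X j))"
  define q where "q = (\<lambda>i c. wquantile alpha_t (pH H n X i) (augmented_scores n Vs c) {1..Suc n})"
  have q_mono: "c \<le> c' \<Longrightarrow> q i c \<le> q i c'" for i c c'
    unfolding q_def using H_range
    by (intro wquantile_mono) (auto simp: pH_nonneg augmented_scores_def)
  have vbar: "q (Suc n) u < u \<Longrightarrow> q (Suc n) \<infinity> \<le> u"
    unfolding q_def u_def
    by (erule wquantile_le_of_less) (auto simp: augmented_scores_def)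
  have "\<alpha> \<le> (\<Sum>i\<in>{1..n}. w (X i) / W * (if ereal (Vs i) \<le> q i u then 1 else 0))
      + w (X (Suc n)) / W * (if u \<le> q (Suc n) u then 1 else 0)"
  proof (rule coverage_ge_of_extreme_test_scores[OF _ q_mono _ vbar])
    show "0 \<le> u" using V_nonneg by (simp add: u_def)
    show "0 \<le> w (X i) / W" for i
      unfolding W_def using w_pos by (intro divide_nonneg_nonneg sum_nonneg) (auto intro: less_imp_le)
    show "\<alpha> \<le> (\<Sum>i\<in>{1..n}. w (X i) / W * (if ereal (Vs i) \<le> q i (q (Suc n) \<infinity>) then 1 else 0))"
      using cond1 unfolding Let_def q_def augmented_scores_def W_def Vs_def by simp
    show "\<alpha> \<le> (\<Sum>i\<in>{1..n}. w (X i) / W * (if ereal (Vs i) \<le> q i 0 then 1 else 0))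
        + w (X (Suc n)) / W"
      using cond2 unfolding Let_def q_def augmented_scores_def W_def Vs_def by simp
  qed
  then show "\<alpha> \<le> alpha_hat w H V n X Y alpha_t y"
    by (simp add: alpha_hat_split q_def u_def Vs_def W_def)
qed

end
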